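(* Let $G>I$ be a finite group with $Z(G)=I$ and let $\sigma_1,\sigma_2\in G$ with $G=\langle\sigma_1,\sigma_2\rangle$, $\sigma_1\sigma_2\sigma_1=\sigma_2\sigma_1\sigma_2$ and $o(\sigma_1\sigma_2\sigma_1)=2$. Let $C=[\sigma_1]$ and $D=[\sigma_1\sigma_2\sigma_1]$ (conjugacy classes). Put $h_1=[\sigma_1,\sigma_2,\sigma_1,\sigma_1\sigma_2\sigma_1]$, $h_2=[\sigma_2\sigma_1\sigma_2^{-1},\sigma_2,\sigma_1,\sigma_2\sigma_1^2]$, $h_3=[\sigma_2,\sigma_1,\sigma_1,\sigma_2\sigma_1^2]$, $h_4=[\sigma_2,\sigma_2,\sigma_1,\sigma_2^2\sigma_1]$. Then $Z_4=\{h_1\}^{B_4}=\{h_1,h_2,h_3,h_4\}\subseteq\Sigma^i(C,C,C,D)$ is an orbit of length $4$ under $B_4$, with (identifying $h_i$ with $i$) $\rho_4(\beta_{12})=(1,2,3)(4)$, $\rho_4(\beta_{13})=(1,3,4)(2)$, $\rho_4(\beta_{14})=(1,4,2)(3)$, $\rho_4(B_4)\cong A_4$, and genus $g_{Z_4}=0$.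
   Context: $\iota$ is the identity and $I$ the trivial group. $\Sigma^i(C_1,\dots,C_4)$ is the set of $G$-conjugacy classes $[\sigma_1,\dots,\sigma_4]$ (simultaneous conjugation) of tuples with $\sigma_j\in C_j$, $\langle\sigma_1,\dots,\sigma_4\rangle=G$, $\sigma_1\sigma_2\sigma_3\sigma_4=\iota$. Braids act from the right: $[\underline{\sigma}]^{\beta_2}=[\sigma_1\sigma_2\sigma_1^{-1},\sigma_1,\sigma_3,\sigma_4]$, $[\underline{\sigma}]^{\beta_3}=[\sigma_1,\sigma_2\sigma_3\sigma_2^{-1},\sigma_2,\sigma_4]$, $[\underline{\sigma}]^{\beta_4}=[\sigma_1,\sigma_2,\sigma_3\sigma_4\sigma_3^{-1},\sigma_3]$. The pure braid group $B_4$ is generated by $\beta_{12}=\beta_2^2$, $\beta_{13}=\beta_2^{-1}\beta_3^2\beta_2$, $\beta_{14}=\beta_2^{-1}\beta_3^{-1}\beta_4^2\beta_3\beta_2$, $\beta_{23}=\beta_3^2$, $\beta_{24}=\beta_3^{-1}\beta_4^2\beta_3$, $\beta_{34}=\beta_4^2$; $\rho_4$ is the induced permutation representation. For a $B_4$-orbit $Z$, $g_Z=1-|Z|+\frac12(3|Z|-z_{12}-z_{13}-z_{14})$ with $z_{1j}$ the number of cycles (fixed points included) of $\rho_4(\beta_{1j})$ on $Z$. *)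

theory Defs
  imports "HOL-Algebra.Algebra" "HOL-Algebra.Sym_Groups"
begin

definition grp_center :: "('a, 'b) monoid_scheme \<Rightarrow> 'a set" where
  "grp_center G = {z \<in> carrier G. \<forall>g \<in> carrier G. z \<otimes>\<^bsub>G\<^esub> g = g \<otimes>\<^bsub>G\<^esub> z}"

definition gconj :: "('a, 'b) monoid_scheme \<Rightarrow> 'a \<Rightarrow> 'a \<Rightarrow> 'a" where
  "gconj G g x = g \<otimes>\<^bsub>G\<^esub> x \<otimes>\<^bsub>G\<^esub> inv\<^bsub>G\<^esub> g"

definition conj_class :: "('a, 'b) monoid_scheme \<Rightarrow> 'a \<Rightarrow> 'a set" where
  "conj_class G x = {gconj G g x | g. g \<in> carrier G}"

type_synonym 'a tup4 = "'a \<times> 'a \<times> 'a \<times> 'a"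

fun tconj :: "('a, 'b) monoid_scheme \<Rightarrow> 'a \<Rightarrow> 'a tup4 \<Rightarrow> 'a tup4" where
  "tconj G g (a, b, c, d) = (gconj G g a, gconj G g b, gconj G g c, gconj G g d)"

definition tclass :: "('a, 'b) monoid_scheme \<Rightarrow> 'a tup4 \<Rightarrow> 'a tup4 set" where
  "tclass G t = {tconj G g t | g. g \<in> carrier G}"

definition Sigma_i :: "('a, 'b) monoid_scheme \<Rightarrow> 'a set \<Rightarrow> 'a set \<Rightarrow> 'a set \<Rightarrow> 'a set
    \<Rightarrow> 'a tup4 set set" where
  "Sigma_i G C1 C2 C3 C4 =
     {tclass G (a, b, c, d) | a b c d.
        a \<in> C1 \<and> b \<in> C2 \<and> c \<in> C3 \<and> d \<in> C4 \<and>
        generate G {a, b, c, d} = carrier G \<and>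
        a \<otimes>\<^bsub>G\<^esub> b \<otimes>\<^bsub>G\<^esub> c \<otimes>\<^bsub>G\<^esub> d = \<one>\<^bsub>G\<^esub>}"

(* Artin generators beta_k (k = 2,3,4; flag True) and their inverses (flag False),
   acting from the right on tuples *)
fun tbraid :: "('a, 'b) monoid_scheme \<Rightarrow> nat \<times> bool \<Rightarrow> 'a tup4 \<Rightarrow> 'a tup4" where
  "tbraid G (k, s) (a, b, c, d) =
    (if k = 2 then (if s then (gconj G a b, a, c, d) else (b, gconj G (m_inv G b) a, c, d))
     else if k = 3 then (if s then (a, gconj G b c, b, d) else (a, c, gconj G (m_inv G c) b, d))
     else if k = 4 then (if s then (a, b, gconj G c d, c) else (a, b, d, gconj G (m_inv G d) c))
     else (a, b, c, d))"

definition cbraid :: "('a, 'b) monoid_scheme \<Rightarrow> nat \<times> bool \<Rightarrow> 'a tup4 set \<Rightarrow> 'a tup4 set" where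
  "cbraid G s Y = image (tbraid G s) Y"

(* right action of a braid word (leftmost letter acts first) *)
definition act_word :: "('a, 'b) monoid_scheme \<Rightarrow> (nat \<times> bool) list \<Rightarrow> 'a tup4 set \<Rightarrow> 'a tup4 set" where
  "act_word G w Y = fold (cbraid G) w Y"

definition inv_word :: "(nat \<times> bool) list \<Rightarrow> (nat \<times> bool) list" where
  "inv_word w = rev (map (\<lambda>(k, s). (k, \<not> s)) w)"

definition beta12 :: "(nat \<times> bool) list" where "beta12 = [(2, True), (2, True)]"
definition beta13 :: "(nat \<times> bool) list" where
  "beta13 = [(2, False), (3, True), (3, True), (2, True)]"
definition beta14 :: "(nat \<times> bool) list" where
  "beta14 = [(2, False), (3, False), (4, True), (4, True), (3, True), (2, True)]"
definition beta23 :: "(nat \<times> bool) list" where "beta23 = [(3, True), (3, True)]"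
definition beta24 :: "(nat \<times> bool) list" where
  "beta24 = [(3, False), (4, True), (4, True), (3, True)]"
definition beta34 :: "(nat \<times> bool) list" where "beta34 = [(4, True), (4, True)]"

definition pure_gens :: "(nat \<times> bool) list set" where
  "pure_gens = {beta12, beta13, beta14, beta23, beta24, beta34}"

(* words representing the elements of the pure braid group B_4 *)
definition pure_words :: "(nat \<times> bool) list set" where
  "pure_words = {concat ws | ws. set ws \<subseteq> pure_gens \<union> inv_word ` pure_gens}"

definition orbitB :: "('a, 'b) monoid_scheme \<Rightarrow> 'a tup4 set \<Rightarrow> 'a tup4 set set" where
  "orbitB G Y = {act_word G w Y | w. w \<in> pure_words}"

definition rho :: "('a, 'b) monoid_scheme \<Rightarrow> 'a tup4 set set \<Rightarrow> (nat \<times> bool) list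
    \<Rightarrow> ('a tup4 set \<Rightarrow> 'a tup4 set)" where
  "rho G Z w = restrict (act_word G w) Z"

(* the permutation group rho_4(B_4) on Z (right action: z^(fg) = (z^f)^g) *)
definition rho_group :: "('a, 'b) monoid_scheme \<Rightarrow> 'a tup4 set set
    \<Rightarrow> ('a tup4 set \<Rightarrow> 'a tup4 set) monoid" where
  "rho_group G Z = \<lparr> carrier = rho G Z ` pure_words,
                     monoid.mult = (\<lambda>f g. restrict (g \<circ> f) Z),
                     monoid.one = restrict id Z \<rparr>"

definition ncycles :: "('c \<Rightarrow> 'c) \<Rightarrow> 'c set \<Rightarrow> nat" where
  "ncycles f Z = card {{(f ^^ n) z | n. True} | z. z \<in> Z}"

definition genus :: "('a, 'b) monoid_scheme \<Rightarrow> 'a tup4 set set \<Rightarrow> real" where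
  "genus G Z = 1 - real (card Z) +
     (3 * real (card Z) - real (ncycles (act_word G beta12) Z)
       - real (ncycles (act_word G beta13) Z) - real (ncycles (act_word G beta14) Z)) / 2"

end

theory Submission
  imports Defs
begin

(* Put z = s1 s2 s1 and y = s1 z. The braid relation says that conjugation by z swaps s1 and s2;
   together with z^2 = 1 this gives y^3 = 1, s1 = y z and s2 = z y, so G is a quotient of
   <y, z | y^3, z^2>, the modular group PSL(2,Z). Every braid computation on h1, ..., h4 is then an
   identity in this free product, verified by normal-form rewriting once an element conjugating
   the braided tuple to the listed representative is supplied.
   The classes h1, ..., h4 are pairwise distinct because the pattern of equal entries among the
   first three components is invariant under simultaneous conjugation, and s1, s2 do not commute
   (otherwise G would be abelian, contradicting Z(G) = 1 < G). Each pure generator permutes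
   {h1, ..., h4} by a 3-cycle, so B_4 acts through A_4; the induced 3-cycles generate all twelve
   elements of A_4, so rho_4(B_4) is A_4. Finally rho_4(beta_12), rho_4(beta_13), rho_4(beta_14)
   each have two cycles, whence g = 1 - 4 + (12 - 6)/2 = 0. *)

section \<open>Conjugation, centres and the braid relation\<close>

context group
begin

lemma inv_mult_cancel_left [simp]: "a \<in> carrier G \<Longrightarrow> x \<in> carrier G \<Longrightarrow> inv a \<otimes> (a \<otimes> x) = x"
  by (simp add: m_assoc [symmetric])

lemma mult_inv_cancel_left [simp]: "a \<in> carrier G \<Longrightarrow> x \<in> carrier G \<Longrightarrow> a \<otimes> (inv a \<otimes> x) = x"
  by (simp add: m_assoc [symmetric])

lemma gconj_closed [simp]: "g \<in> carrier G \<Longrightarrow> x \<in> carrier G \<Longrightarrow> gconj G g x \<in> carrier G"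
  by (simp add: gconj_def)

lemma gconj_one [simp]: "x \<in> carrier G \<Longrightarrow> gconj G \<one> x = x"
  by (simp add: gconj_def)

lemma gconj_gconj:
  "g \<in> carrier G \<Longrightarrow> h \<in> carrier G \<Longrightarrow> x \<in> carrier G \<Longrightarrow>
   gconj G h (gconj G g x) = gconj G (h \<otimes> g) x"
  by (simp add: gconj_def m_assoc inv_mult_group)

lemma inv_gconj: "g \<in> carrier G \<Longrightarrow> x \<in> carrier G \<Longrightarrow> inv (gconj G g x) = gconj G g (inv x)"
  by (simp add: gconj_def m_assoc inv_mult_group)

lemma gconj_gconj_swap:
  "g \<in> carrier G \<Longrightarrow> a \<in> carrier G \<Longrightarrow> x \<in> carrier G \<Longrightarrow>
   gconj G (gconj G g a) (gconj G g x) = gconj G g (gconj G a x)"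
  by (simp add: gconj_def m_assoc inv_mult_group)

lemma gconj_cancel [simp]:
  "g \<in> carrier G \<Longrightarrow> a \<in> carrier G \<Longrightarrow> b \<in> carrier G \<Longrightarrow> gconj G g a = gconj G g b \<longleftrightarrow> a = b"
  unfolding gconj_def by (metis inv_closed m_closed r_cancel l_cancel)

lemma gconj_self [simp]: "a \<in> carrier G \<Longrightarrow> gconj G a a = a"
  by (simp add: gconj_def m_assoc)

lemma gconj_eq_self_iff:
  "g \<in> carrier G \<Longrightarrow> x \<in> carrier G \<Longrightarrow> gconj G g x = x \<longleftrightarrow> g \<otimes> x = x \<otimes> g"
  unfolding gconj_def by (metis inv_solve_right m_closed)

lemma gconj_eq_conjugator_iff: "g \<in> carrier G \<Longrightarrow> x \<in> carrier G \<Longrightarrow> gconj G g x = g \<longleftrightarrow> x = g"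
  using gconj_cancel[of g x g] by simp

lemma conj_classI: "g \<in> carrier G \<Longrightarrow> gconj G g a \<in> conj_class G a"
  unfolding conj_class_def by blast

lemma conj_class_subset_carrier: "x \<in> carrier G \<Longrightarrow> conj_class G x \<subseteq> carrier G"
  unfolding conj_class_def by auto

lemma conj_class_self: "a \<in> carrier G \<Longrightarrow> a \<in> conj_class G a"
  using conj_classI[of \<one> a] by simp

lemma generate_eq_carrier_mono:
  assumes "generate G S = carrier G" and "S \<subseteq> T" and "T \<subseteq> carrier G"
  shows "generate G T = carrier G"
  using mono_generate[OF assms(2)] generate_incl[OF assms(3)] assms(1) by blast

lemma commutes_with_generate:
  assumes x: "x \<in> carrier G" and S: "S \<subseteq> carrier G" and comm: "\<And>s. s \<in> S \<Longrightarrow> x \<otimes> s = s \<otimes> x"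
  shows "h \<in> generate G S \<Longrightarrow> x \<otimes> h = h \<otimes> x"
proof (induction rule: generate.induct)
  case (inv h)
  then have h: "h \<in> carrier G" using S by blast
  have "x \<otimes> inv h = inv h \<otimes> (h \<otimes> x) \<otimes> inv h" using x h by (simp add: m_assoc)
  also have "\<dots> = inv h \<otimes> x" using x h by (simp add: comm[OF inv, symmetric] m_assoc)
  finally show ?case .
next
  case (eng h1 h2)
  then have "h1 \<in> carrier G" "h2 \<in> carrier G" using generate_in_carrier S by auto
  with eng.IH x show ?case by (metis m_assoc)
qed (use x comm in simp_all)

lemma central_if_commutes_with_generators:
  assumes "generate G S = carrier G" and "S \<subseteq> carrier G" and "x \<in> carrier G"
    and "\<And>s. s \<in> S \<Longrightarrow> x \<otimes> s = s \<otimes> x"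
  shows "x \<in> grp_center G"
  using commutes_with_generate[of x S] assms unfolding grp_center_def by blast

lemma two_generators_noncommuting:
  assumes gen: "generate G {a, b} = carrier G" and ab: "a \<in> carrier G" "b \<in> carrier G"
    and centre: "grp_center G = {\<one>}" and nontrivial: "carrier G \<noteq> {\<one>}"
  shows "a \<otimes> b \<noteq> b \<otimes> a"
proof
  assume comm: "a \<otimes> b = b \<otimes> a"
  have "a \<in> grp_center G"
    using central_if_commutes_with_generators[OF gen] ab comm by auto
  moreover have "b \<in> grp_center G"
    using central_if_commutes_with_generators[OF gen] ab comm[symmetric] by auto
  ultimately have "a = \<one>" "b = \<one>" using centre by auto
  then have "x \<in> grp_center G" if "x \<in> carrier G" for x
    using central_if_commutes_with_generators[OF gen] ab that by auto
  then show False using centre nontrivial by blast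
qed

lemma braid_involution_modular_pair:
  assumes s1: "s1 \<in> carrier G" and s2: "s2 \<in> carrier G"
    and braid: "s1 \<otimes> s2 \<otimes> s1 = s2 \<otimes> s1 \<otimes> s2"
    and involution: "(s1 \<otimes> s2 \<otimes> s1) \<otimes> (s1 \<otimes> s2 \<otimes> s1) = \<one>"
  shows "\<exists>y z. y \<in> carrier G \<and> z \<in> carrier G \<and> y \<otimes> y \<otimes> y = \<one> \<and> z \<otimes> z = \<one> \<and>
    s1 = y \<otimes> z \<and> s2 = z \<otimes> y"
proof (intro exI conjI)
  define z where "z = s1 \<otimes> s2 \<otimes> s1"
  have z: "z \<in> carrier G" using s1 s2 by (simp add: z_def)
  show "z \<otimes> z = \<one>" using involution by (simp add: z_def)
  have z_s1: "z \<otimes> s1 = s2 \<otimes> z"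
  proof -
    have "z \<otimes> s1 = (s2 \<otimes> s1 \<otimes> s2) \<otimes> s1" by (simp add: z_def braid)
    then show ?thesis using s1 s2 by (simp add: z_def m_assoc)
  qed
  have z_s2: "z \<otimes> s2 = s1 \<otimes> z"
  proof -
    have "z \<otimes> s2 = s1 \<otimes> (s2 \<otimes> s1 \<otimes> s2)" using s1 s2 by (simp add: z_def m_assoc)
    then show ?thesis by (simp add: z_def braid)
  qed
  show "s1 \<otimes> z \<in> carrier G" "z \<in> carrier G" using s1 z by simp_all
  show "s1 = s1 \<otimes> z \<otimes> z"
    using s1 z \<open>z \<otimes> z = \<one>\<close> by (simp add: m_assoc)
  show "s2 = z \<otimes> (s1 \<otimes> z)"
  proof -
    have "z \<otimes> (s1 \<otimes> z) = s2 \<otimes> z \<otimes> z" using s1 z by (simp add: z_s1 m_assoc [symmetric])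
    then show ?thesis using s2 z \<open>z \<otimes> z = \<one>\<close> by (simp add: m_assoc)
  qed
  have "s1 \<otimes> z \<otimes> (s1 \<otimes> z) \<otimes> (s1 \<otimes> z) = s1 \<otimes> (z \<otimes> s1) \<otimes> (z \<otimes> s1) \<otimes> z"
    using s1 z by (simp add: m_assoc)
  also have "\<dots> = s1 \<otimes> s2 \<otimes> (z \<otimes> s2) \<otimes> (z \<otimes> z)"
    using s1 s2 z by (simp add: z_s1 m_assoc)
  also have "\<dots> = s1 \<otimes> s2 \<otimes> s1 \<otimes> z"
    using s1 s2 z by (simp add: z_s2 \<open>z \<otimes> z = \<one>\<close> m_assoc)
  finally show "s1 \<otimes> z \<otimes> (s1 \<otimes> z) \<otimes> (s1 \<otimes> z) = \<one>"
    using \<open>z \<otimes> z = \<one>\<close> by (simp add: z_def [symmetric])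
qed

end

section \<open>The braid action on classes of tuples\<close>

abbreviation carrier4 :: "('a, 'b) monoid_scheme \<Rightarrow> 'a tup4 set" where
  "carrier4 G \<equiv> carrier G \<times> carrier G \<times> carrier G \<times> carrier G"

fun coincidences :: "'a tup4 \<Rightarrow> bool \<times> bool \<times> bool" where
  "coincidences (a, b, c, d) = (a = b, a = c, b = c)"

lemma act_word_Nil [simp]: "act_word G [] Y = Y"
  by (simp add: act_word_def)

lemma act_word_append: "act_word G (u @ v) Y = act_word G v (act_word G u Y)"
  by (simp add: act_word_def)

context group
begin

lemma tbraid_closed: "t \<in> carrier4 G \<Longrightarrow> tbraid G s t \<in> carrier4 G"
  by (cases t; cases s) auto

lemma fold_tbraid_closed: "t \<in> carrier4 G \<Longrightarrow> fold (tbraid G) w t \<in> carrier4 G"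
  by (induction w arbitrary: t) (auto simp: tbraid_closed)

lemma tconj_closed: "g \<in> carrier G \<Longrightarrow> t \<in> carrier4 G \<Longrightarrow> tconj G g t \<in> carrier4 G"
  by (cases t) auto

lemma tconj_tconj:
  "g \<in> carrier G \<Longrightarrow> h \<in> carrier G \<Longrightarrow> t \<in> carrier4 G \<Longrightarrow>
   tconj G h (tconj G g t) = tconj G (h \<otimes> g) t"
  by (cases t) (auto simp: gconj_gconj)

lemma tconj_one [simp]: "t \<in> carrier4 G \<Longrightarrow> tconj G \<one> t = t"
  by (cases t) auto

lemma tbraid_tconj:
  "g \<in> carrier G \<Longrightarrow> t \<in> carrier4 G \<Longrightarrow> tbraid G s (tconj G g t) = tconj G g (tbraid G s t)"
  by (cases t; cases s) (auto simp: gconj_gconj_swap inv_gconj)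

lemma tbraid_inverse: "t \<in> carrier4 G \<Longrightarrow> tbraid G (k, \<not> b) (tbraid G (k, b) t) = t"
  by (cases t; cases b) (auto simp: gconj_def m_assoc inv_mult_group)

lemma tclass_tconj_subset:
  assumes g: "g \<in> carrier G" and t: "t \<in> carrier4 G"
  shows "tclass G (tconj G g t) \<subseteq> tclass G t"
proof
  fix x assume "x \<in> tclass G (tconj G g t)"
  then obtain h where h: "h \<in> carrier G" and "x = tconj G h (tconj G g t)"
    unfolding tclass_def by blast
  then have "x = tconj G (h \<otimes> g) t" using g t by (simp add: tconj_tconj)
  then show "x \<in> tclass G t" unfolding tclass_def using g h by blast
qed

lemma tclass_tconj: "g \<in> carrier G \<Longrightarrow> t \<in> carrier4 G \<Longrightarrow> tclass G (tconj G g t) = tclass G t"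
  using tclass_tconj_subset[of "inv g" "tconj G g t"]
  by (simp add: tclass_tconj_subset tconj_closed tconj_tconj subset_antisym)

lemma tclass_eq_tconj:
  assumes "t \<in> carrier4 G" and "tclass G t = tclass G t'"
  shows "\<exists>g\<in>carrier G. t = tconj G g t'"
proof -
  have "tconj G \<one> t \<in> tclass G t" unfolding tclass_def by blast
  then have "t \<in> tclass G t'" using assms by simp
  then show ?thesis unfolding tclass_def by blast
qed

lemma tclass_eq_image: "tclass G t = (\<lambda>g. tconj G g t) ` carrier G"
  unfolding tclass_def by blast

lemma cbraid_tclass: "t \<in> carrier4 G \<Longrightarrow> cbraid G s (tclass G t) = tclass G (tbraid G s t)"
  unfolding cbraid_def tclass_eq_image image_image by (rule image_cong) (simp_all add: tbraid_tconj)

lemma act_word_tclass: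
  "t \<in> carrier4 G \<Longrightarrow> act_word G w (tclass G t) = tclass G (fold (tbraid G) w t)"
  unfolding act_word_def
  by (induction w arbitrary: t) (simp_all add: cbraid_tclass tbraid_closed)

lemma act_word_tclass_conjI:
  assumes "t \<in> carrier4 G" and "g \<in> carrier G" and "tconj G g (fold (tbraid G) w t) = t'"
  shows "act_word G w (tclass G t) = tclass G t'"
  using assms by (simp add: act_word_tclass tclass_tconj fold_tbraid_closed flip: assms(3))

lemma fold_tbraid_inv_word:
  "t \<in> carrier4 G \<Longrightarrow> fold (tbraid G) (inv_word w) (fold (tbraid G) w t) = t"
proof (induction w arbitrary: t)
  case (Cons a w)
  obtain k b where "a = (k, b)" by fastforce
  then show ?case
    using Cons tbraid_closed by (simp add: inv_word_def tbraid_inverse)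
qed (simp add: inv_word_def)

lemma act_word_inv_word:
  "t \<in> carrier4 G \<Longrightarrow> act_word G (inv_word w) (act_word G w (tclass G t)) = tclass G t"
  by (simp add: act_word_tclass fold_tbraid_closed fold_tbraid_inv_word)

lemma coincidences_tconj:
  "g \<in> carrier G \<Longrightarrow> t \<in> carrier4 G \<Longrightarrow> coincidences (tconj G g t) = coincidences t"
  by (cases t) simp

lemma tclass_neqI:
  assumes "t \<in> carrier4 G" and "t' \<in> carrier4 G" and "coincidences t \<noteq> coincidences t'"
  shows "tclass G t \<noteq> tclass G t'"
  using assms tclass_eq_tconj[of t t'] coincidences_tconj tconj_closed by metis

lemma tclass_in_Sigma_iI:
  "a \<in> C1 \<Longrightarrow> b \<in> C2 \<Longrightarrow> c \<in> C3 \<Longrightarrow> d \<in> C4 \<Longrightarrow> generate G {a, b, c, d} = carrier G \<Longrightarrow>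
   a \<otimes> b \<otimes> c \<otimes> d = \<one> \<Longrightarrow> tclass G (a, b, c, d) \<in> Sigma_i G C1 C2 C3 C4"
  unfolding Sigma_i_def by blast

end

section \<open>Permutation representations on families of classes\<close>

lemma funpow_orbit_3_cycle:
  assumes "f a = b" and "f b = c" and "f c = a"
  shows "{(f ^^ k) a | k. True} = {a, b, c}"
proof -
  have "(f ^^ k) a \<in> {a, b, c}" for k by (induction k) (use assms in auto)
  moreover have "a = (f ^^ 0) a" "b = (f ^^ 1) a" "c = (f ^^ 2) a"
    using assms by (simp_all add: numeral_2_eq_2)
  ultimately show ?thesis by blast
qed

lemma funpow_orbit_fixpoint:
  assumes "f d = d"
  shows "{(f ^^ k) d | k. True} = {d}"
proof -
  have "(f ^^ k) d = d" for k by (induction k) (simp_all add: assms)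
  then show ?thesis by auto
qed

lemma ncycles_3_cycle_fixpoint:
  assumes "a \<noteq> d" and "f a = b" and "f b = c" and "f c = a" and "f d = d"
  shows "ncycles f {a, b, c, d} = 2"
proof -
  let ?orbit = "\<lambda>x. {(f ^^ k) x | k. True}"
  have "{?orbit x | x. x \<in> {a, b, c, d}} = {?orbit a, ?orbit b, ?orbit c, ?orbit d}"
    by blast
  also have "\<dots> = {{a, b, c}, {b, c, a}, {c, a, b}, {d}}"
    by (simp only: funpow_orbit_3_cycle[of f a, OF assms(2-4)]
        funpow_orbit_3_cycle[of f b, OF assms(3,4,2)] funpow_orbit_3_cycle[of f c, OF assms(4,2,3)]
        funpow_orbit_fixpoint[of f d, OF assms(5)])
  also have "\<dots> = {{a, b, c}, {d}}" by (simp add: insert_commute)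
  finally show ?thesis using assms(1) unfolding ncycles_def by (simp add: doubleton_eq_iff)
qed

definition induces_perm ::
    "('a, 'b) monoid_scheme \<Rightarrow> nat \<Rightarrow> (nat \<Rightarrow> 'a tup4 set) \<Rightarrow> (nat \<times> bool) list \<Rightarrow> (nat \<Rightarrow> nat) \<Rightarrow> bool"
  where "induces_perm G n H w p \<longleftrightarrow> (\<forall>i\<in>{1..n}. act_word G w (H i) = H (p i))"

lemma induces_perm_Nil: "induces_perm G n H [] id"
  by (simp add: induces_perm_def)

lemma induces_perm_append:
  assumes "induces_perm G n H u p" and "induces_perm G n H v q" and "p permutes {1..n}"
  shows "induces_perm G n H (u @ v) (q \<circ> p)"
  using assms permutes_in_image[OF assms(3)] by (simp add: induces_perm_def act_word_append)

lemma alt_group_comp_closed: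
  "p \<in> carrier (alt_group n) \<Longrightarrow> q \<in> carrier (alt_group n) \<Longrightarrow> q \<circ> p \<in> carrier (alt_group n)"
  using group.subgroupE(4)[OF sym_group_is_group alt_group_is_subgroup] by (simp add: sym_group_mult)

lemma alt_group_id: "id \<in> carrier (alt_group n)"
  by (simp add: alt_group_carrier permutes_id evenperm_id)

lemma inj_on_alt_group_inv: "inj_on inv' (carrier (alt_group n))"
  by (rule inj_onI) (metis alt_group_carrier inv_inv_eq permutes_bij)

lemma alt_group_inv_image: "inv' ` carrier (alt_group n) = carrier (alt_group n)"
proof
  show "carrier (alt_group n) \<subseteq> inv' ` carrier (alt_group n)"
    using alt_group_inv_closed by (metis alt_group_carrier image_eqI inv_inv_eq permutes_bij subsetI)
qed (use alt_group_inv_closed in blast)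

lemma pure_words_Nil: "[] \<in> pure_words"
  unfolding pure_words_def by (intro CollectI exI[of _ "[]"]) auto

lemma pure_gens_in_pure_words: "w \<in> pure_gens \<Longrightarrow> w \<in> pure_words"
  unfolding pure_words_def by (intro CollectI exI[of _ "[w]"]) auto

lemma pure_words_append:
  assumes "u \<in> pure_words" and "v \<in> pure_words"
  shows "u @ v \<in> pure_words"
proof -
  obtain us vs where "u = concat us" "set us \<subseteq> pure_gens \<union> inv_word ` pure_gens"
    and "v = concat vs" "set vs \<subseteq> pure_gens \<union> inv_word ` pure_gens"
    using assms unfolding pure_words_def by blast
  then show ?thesis unfolding pure_words_def by (intro CollectI exI[of _ "us @ vs"]) auto
qed

lemma three_cycle_in_alt_group:
  assumes "distinct [a, b, c]" and "{a, b, c} \<subseteq> {1..n}"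
  shows "cycle_of_list [a, b, c] \<in> carrier (alt_group n)"
proof -
  have "cycle_of_list [a, b, c] \<in> three_cycles n" using assms by fastforce
  then show ?thesis using three_cycles_incl by blast
qed

locale braid_permuted_classes = group G for G (structure) +
  fixes n :: nat and H :: "nat \<Rightarrow> 'a tup4 set"
  assumes inj_on_H: "inj_on H {1..n}"
    and H_tclass: "i \<in> {1..n} \<Longrightarrow> \<exists>t\<in>carrier4 G. H i = tclass G t"
    and pure_gens_induce_even_perm:
      "w \<in> pure_gens \<Longrightarrow> \<exists>p\<in>carrier (alt_group n). induces_perm G n H w p"
begin

lemma induces_perm_inv_word:
  assumes w: "induces_perm G n H w p" and p: "p permutes {1..n}"
  shows "induces_perm G n H (inv_word w) (inv' p)"
  unfolding induces_perm_def
proof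
  fix i :: nat assume i: "i \<in> {1..n}"
  define j where "j = inv' p i"
  have j: "j \<in> {1..n}" unfolding j_def using i permutes_in_image[OF permutes_inv[OF p]] by simp
  obtain t where t: "t \<in> carrier4 G" "H j = tclass G t" using H_tclass[OF j] by blast
  have "H i = act_word G w (H j)"
    using w j permutes_inverses(1)[OF p] unfolding induces_perm_def j_def by simp
  then show "act_word G (inv_word w) (H i) = H (inv' p i)"
    using act_word_inv_word[OF t(1)] t(2) unfolding j_def by simp
qed

lemma pure_words_induce_even_perm:
  assumes "w \<in> pure_words"
  shows "\<exists>p\<in>carrier (alt_group n). induces_perm G n H w p"
proof -
  obtain ws where w: "w = concat ws" and ws: "set ws \<subseteq> pure_gens \<union> inv_word ` pure_gens"
    using assms unfolding pure_words_def by blast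
  have letters: "\<exists>p\<in>carrier (alt_group n). induces_perm G n H v p"
    if v: "v \<in> pure_gens \<union> inv_word ` pure_gens" for v
  proof (cases "v \<in> pure_gens")
    case False
    then obtain u p where "v = inv_word u" and p: "p \<in> carrier (alt_group n)" "induces_perm G n H u p"
      using v pure_gens_induce_even_perm by blast
    moreover have "induces_perm G n H (inv_word u) (inv' p)"
      using p induces_perm_inv_word by (simp add: alt_group_carrier)
    ultimately show ?thesis using alt_group_inv_closed by blast
  qed (use pure_gens_induce_even_perm in blast)
  from ws show ?thesis unfolding w
  proof (induction ws)
    case Nil
    show ?case using induces_perm_Nil alt_group_id by fastforce
  next
    case (Cons v ws)
    then obtain p q where p: "p \<in> carrier (alt_group n)" "induces_perm G n H v p"
      and q: "q \<in> carrier (alt_group n)" "induces_perm G n H (concat ws) q"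
      using letters[of v] by auto
    have "induces_perm G n H (v @ concat ws) (q \<circ> p)"
      using induces_perm_append[OF p(2) q(2)] p(1) by (simp add: alt_group_carrier)
    then show ?case using alt_group_comp_closed[OF p(1) q(1)] by auto
  qed
qed

lemma orbitB_subset:
  assumes i: "i \<in> {1..n}"
  shows "orbitB G (H i) \<subseteq> H ` {1..n}"
proof
  fix Y assume "Y \<in> orbitB G (H i)"
  then obtain w where "w \<in> pure_words" and Y: "Y = act_word G w (H i)" unfolding orbitB_def by blast
  then obtain p where p: "p \<in> carrier (alt_group n)" "induces_perm G n H w p"
    using pure_words_induce_even_perm by blast
  then have "p i \<in> {1..n}" using i permutes_in_image by (fastforce simp: alt_group_carrier)
  moreover have "Y = H (p i)" using p(2) i Y unfolding induces_perm_def by blast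
  ultimately show "Y \<in> H ` {1..n}" by blast
qed

definition class_perm :: "(nat \<Rightarrow> nat) \<Rightarrow> 'a tup4 set \<Rightarrow> 'a tup4 set" where
  "class_perm p = restrict (H \<circ> p \<circ> the_inv_into {1..n} H) (H ` {1..n})"

(* The default simp rule One_nat_def rewrites the numeral 1 to Suc 0, e.g. {1..n} to
   {Suc 0..n}, after which rules stated with 1 (such as the_inv_into_H) stop matching;
   hence the recurring "del: One_nat_def". *)
lemma the_inv_into_H: "i \<in> {1..n} \<Longrightarrow> the_inv_into {1..n} H (H i) = i"
  by (rule the_inv_into_f_f[OF inj_on_H])

lemma class_perm_H: "i \<in> {1..n} \<Longrightarrow> class_perm p (H i) = H (p i)"
  unfolding class_perm_def by (simp add: the_inv_into_H del: One_nat_def)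

lemma restrict_eq_on_H:
  "(\<And>i. i \<in> {1..n} \<Longrightarrow> f (H i) = g (H i)) \<Longrightarrow> restrict f (H ` {1..n}) = restrict g (H ` {1..n})"
  by (rule restrict_ext) blast

lemma rho_eq_class_perm: "induces_perm G n H w p \<Longrightarrow> rho G (H ` {1..n}) w = class_perm p"
  unfolding rho_def class_perm_def
  by (rule restrict_eq_on_H) (simp add: induces_perm_def the_inv_into_H del: One_nat_def)

lemma class_perm_comp:
  assumes "p permutes {1..n}"
  shows "class_perm (q \<circ> p) = restrict (class_perm q \<circ> class_perm p) (H ` {1..n})"
  unfolding class_perm_def[of "q \<circ> p"]
proof (rule restrict_eq_on_H)
  fix i :: nat assume i: "i \<in> {1..n}"
  then have "p i \<in> {1..n}" using permutes_in_image[OF assms] by blast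
  then show "(H \<circ> (q \<circ> p) \<circ> the_inv_into {1..n} H) (H i) = (class_perm q \<circ> class_perm p) (H i)"
    using i by (simp add: the_inv_into_H class_perm_H del: One_nat_def)
qed

lemma inj_on_class_perm: "inj_on class_perm {p. p permutes {1..n}}"
proof (rule inj_onI)
  fix p q assume p: "p \<in> {p. p permutes {1..n}}" and q: "q \<in> {p. p permutes {1..n}}"
    and eq: "class_perm p = class_perm q"
  have "p i = q i" for i
  proof (cases "i \<in> {1..n}")
    case True
    then have "H (p i) = H (q i)" using eq class_perm_H by metis
    moreover have "p i \<in> {1..n}" "q i \<in> {1..n}"
      using True p q permutes_in_image by (metis mem_Collect_eq)+
    ultimately show ?thesis using inj_onD[OF inj_on_H] by blast
  qed (use p q in \<open>metis mem_Collect_eq permutes_not_in\<close>)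
  then show "p = q" by blast
qed

definition realized_perms :: "(nat \<Rightarrow> nat) set" where
  "realized_perms = {p \<in> carrier (alt_group n). \<exists>w\<in>pure_words. induces_perm G n H w p}"

lemma realized_perms_comp:
  assumes "p \<in> realized_perms" and "q \<in> realized_perms"
  shows "q \<circ> p \<in> realized_perms"
proof -
  obtain u v where "u \<in> pure_words" "induces_perm G n H u p" "v \<in> pure_words" "induces_perm G n H v q"
    using assms unfolding realized_perms_def by blast
  moreover have "p permutes {1..n}" using assms unfolding realized_perms_def alt_group_carrier by blast
  ultimately have "u @ v \<in> pure_words" "induces_perm G n H (u @ v) (q \<circ> p)"
    using pure_words_append induces_perm_append by blast+
  then show ?thesis
    using assms alt_group_comp_closed unfolding realized_perms_def by blast
qed

lemma realized_perms_eq_alt_group: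
  assumes "S \<subseteq> realized_perms" and "card (carrier (alt_group n)) \<le> card S"
  shows "realized_perms = carrier (alt_group n)"
proof -
  have fin: "finite (carrier (alt_group n))"
    using finite_permutations[of "{1..n}"]
    by (rule finite_subset[rotated]) (auto simp: alt_group_carrier)
  have sub: "realized_perms \<subseteq> carrier (alt_group n)" unfolding realized_perms_def by blast
  then have "card S \<le> card realized_perms"
    using assms(1) fin by (intro card_mono) (auto intro: finite_subset)
  then show ?thesis using card_seteq[OF fin sub] assms(2) by linarith
qed

lemma rho_words_eq_class_perms:
  assumes "realized_perms = carrier (alt_group n)"
  shows "rho G (H ` {1..n}) ` pure_words = class_perm ` carrier (alt_group n)"
proof
  show "rho G (H ` {1..n}) ` pure_words \<subseteq> class_perm ` carrier (alt_group n)"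
    using pure_words_induce_even_perm rho_eq_class_perm by blast
  show "class_perm ` carrier (alt_group n) \<subseteq> rho G (H ` {1..n}) ` pure_words"
  proof
    fix f assume "f \<in> class_perm ` carrier (alt_group n)"
    then obtain p w where "f = class_perm p" "w \<in> pure_words" "induces_perm G n H w p"
      using assms unfolding realized_perms_def by blast
    then show "f \<in> rho G (H ` {1..n}) ` pure_words" by (metis image_eqI rho_eq_class_perm)
  qed
qed

lemma rho_group_iso_alt_group:
  assumes realized: "realized_perms = carrier (alt_group n)"
  shows "rho_group G (H ` {1..n}) \<cong> alt_group n"
proof -
  let ?A = "carrier (alt_group n)"
  \<comment> \<open>rho is a right action, so class_perm reverses products; composing with inversion repairs this.\<close>
  define \<Phi> where "\<Phi> = class_perm \<circ> inv'"
  have perm: "p permutes {1..n}" if "p \<in> ?A" for p using that by (simp add: alt_group_carrier)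
  have "\<Phi> ` ?A = class_perm ` ?A"
    unfolding \<Phi>_def image_comp [symmetric] alt_group_inv_image ..
  then have carrier: "carrier (rho_group G (H ` {1..n})) = \<Phi> ` ?A"
    using rho_words_eq_class_perms[OF realized] by (simp add: rho_group_def)
  have "inj_on \<Phi> ?A"
    unfolding \<Phi>_def using inj_on_class_perm inj_on_alt_group_inv alt_group_inv_closed
    by (intro comp_inj_on) (auto simp: alt_group_carrier intro: inj_on_subset)
  then have bij: "bij_betw \<Phi> ?A (carrier (rho_group G (H ` {1..n})))"
    unfolding bij_betw_def carrier by blast
  have "\<Phi> (p \<circ> q) = \<Phi> p \<otimes>\<^bsub>rho_group G (H ` {1..n})\<^esub> \<Phi> q" if "p \<in> ?A" "q \<in> ?A" for p q
  proof -
    have "inv' (p \<circ> q) = inv' q \<circ> inv' p"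
      using o_inv_distrib[OF permutes_bij permutes_bij, OF perm perm] that by blast
    then show ?thesis
      unfolding \<Phi>_def using class_perm_comp[OF perm[OF alt_group_inv_closed]] that
      by (simp add: rho_group_def)
  qed
  then have "\<Phi> \<in> hom (alt_group n) (rho_group G (H ` {1..n}))"
    using bij unfolding bij_betw_def by (intro homI) (auto simp: alt_group_mult)
  then have "alt_group n \<cong> rho_group G (H ` {1..n})"
    using bij by (blast intro: is_isoI isoI)
  then show ?thesis using group.iso_sym[OF alt_group_is_group] by blast
qed

end

section \<open>Quotients of the modular group\<close>

locale modular_pair = group G for G (structure) +
  fixes y z :: 'a
  assumes y_carrier [simp]: "y \<in> carrier G" and z_carrier [simp]: "z \<in> carrier G"
    and y_cube: "y \<otimes> y \<otimes> y = \<one>" and z_square: "z \<otimes> z = \<one>"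
begin

abbreviation s1 :: 'a where "s1 \<equiv> y \<otimes> z"
abbreviation s2 :: 'a where "s2 \<equiv> z \<otimes> y"

lemma z_z_cancel: "x \<in> carrier G \<Longrightarrow> z \<otimes> (z \<otimes> x) = x"
  by (simp add: m_assoc [symmetric] z_square)

lemma y_y_y: "y \<otimes> (y \<otimes> y) = \<one>"
  using y_cube by (simp add: m_assoc)

lemma y_y_y_cancel: "x \<in> carrier G \<Longrightarrow> y \<otimes> (y \<otimes> (y \<otimes> x)) = x"
  by (simp add: m_assoc [symmetric] y_cube)

lemma inv_z: "inv z = z"
  using z_square by (simp add: inv_equality)

lemma inv_y: "inv y = y \<otimes> y"
  using y_cube by (simp add: inv_equality)

(* A complete rewrite system for <y, z | y^3, z^2>: words in y, z reduce to a right-nested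
   alternating normal form, so simp decides the word identities needed below. *)
lemmas word_normalize =
  m_assoc z_square z_z_cancel y_y_y y_y_y_cancel inv_z inv_y inv_mult_group gconj_def

definition orbit_tuple :: "nat \<Rightarrow> 'a tup4" where
  "orbit_tuple i =
     (if i = 1 then (s1, s2, s1, s1 \<otimes> s2 \<otimes> s1)
      else if i = 2 then (s2 \<otimes> s1 \<otimes> inv s2, s2, s1, s2 \<otimes> s1 \<otimes> s1)
      else if i = 3 then (s2, s1, s1, s2 \<otimes> s1 \<otimes> s1)
      else (s2, s2, s1, s2 \<otimes> s2 \<otimes> s1))"

definition orbit_class :: "nat \<Rightarrow> 'a tup4 set" where
  "orbit_class i = tclass G (orbit_tuple i)"

lemma orbit_tuple_carrier: "orbit_tuple i \<in> carrier4 G"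
  by (simp add: orbit_tuple_def)

lemma beta12_orbit_class:
  "act_word G beta12 (orbit_class 1) = orbit_class 2"
  "act_word G beta12 (orbit_class 2) = orbit_class 3"
  "act_word G beta12 (orbit_class 3) = orbit_class 1"
  "act_word G beta12 (orbit_class 4) = orbit_class 4"
  unfolding orbit_class_def
  subgoal by (rule act_word_tclass_conjI[OF orbit_tuple_carrier, where g = "z \<otimes> y \<otimes> y"])
      (simp_all add: orbit_tuple_def beta12_def word_normalize)
  subgoal by (rule act_word_tclass_conjI[OF orbit_tuple_carrier, where g = "\<one>"])
      (simp_all add: orbit_tuple_def beta12_def word_normalize)
  subgoal by (rule act_word_tclass_conjI[OF orbit_tuple_carrier, where g = "y \<otimes> z"])
      (simp_all add: orbit_tuple_def beta12_def word_normalize)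
  subgoal by (rule act_word_tclass_conjI[OF orbit_tuple_carrier, where g = "\<one>"])
      (simp_all add: orbit_tuple_def beta12_def word_normalize)
  done

lemma beta13_orbit_class:
  "act_word G beta13 (orbit_class 1) = orbit_class 3"
  "act_word G beta13 (orbit_class 2) = orbit_class 2"
  "act_word G beta13 (orbit_class 3) = orbit_class 4"
  "act_word G beta13 (orbit_class 4) = orbit_class 1"
  unfolding orbit_class_def
  subgoal by (rule act_word_tclass_conjI[OF orbit_tuple_carrier, where g = "z \<otimes> y \<otimes> y \<otimes> z"])
      (simp_all add: orbit_tuple_def beta13_def word_normalize)
  subgoal by (rule act_word_tclass_conjI[OF orbit_tuple_carrier, where g = "\<one>"])
      (simp_all add: orbit_tuple_def beta13_def word_normalize)
  subgoal by (rule act_word_tclass_conjI[OF orbit_tuple_carrier, where g = "z \<otimes> y \<otimes> z \<otimes> y \<otimes> z"])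
      (simp_all add: orbit_tuple_def beta13_def word_normalize)
  subgoal by (rule act_word_tclass_conjI[OF orbit_tuple_carrier, where g = "y \<otimes> y \<otimes> z"])
      (simp_all add: orbit_tuple_def beta13_def word_normalize)
  done

lemma beta14_orbit_class:
  "act_word G beta14 (orbit_class 1) = orbit_class 4"
  "act_word G beta14 (orbit_class 2) = orbit_class 1"
  "act_word G beta14 (orbit_class 3) = orbit_class 3"
  "act_word G beta14 (orbit_class 4) = orbit_class 2"
  unfolding orbit_class_def
  subgoal by (rule act_word_tclass_conjI[OF orbit_tuple_carrier, where g = "\<one>"])
      (simp_all add: orbit_tuple_def beta14_def word_normalize)
  subgoal by (rule act_word_tclass_conjI[OF orbit_tuple_carrier, where g = "\<one>"])
      (simp_all add: orbit_tuple_def beta14_def word_normalize)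
  subgoal by (rule act_word_tclass_conjI[OF orbit_tuple_carrier, where g = "y \<otimes> z \<otimes> y \<otimes> z"])
      (simp_all add: orbit_tuple_def beta14_def word_normalize)
  subgoal by (rule act_word_tclass_conjI[OF orbit_tuple_carrier, where g = "\<one>"])
      (simp_all add: orbit_tuple_def beta14_def word_normalize)
  done

lemma beta23_orbit_class:
  "act_word G beta23 (orbit_class 1) = orbit_class 4"
  "act_word G beta23 (orbit_class 2) = orbit_class 1"
  "act_word G beta23 (orbit_class 3) = orbit_class 3"
  "act_word G beta23 (orbit_class 4) = orbit_class 2"
  unfolding orbit_class_def
  subgoal by (rule act_word_tclass_conjI[OF orbit_tuple_carrier, where g = "z \<otimes> y \<otimes> z"])
      (simp_all add: orbit_tuple_def beta23_def word_normalize)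
  subgoal by (rule act_word_tclass_conjI[OF orbit_tuple_carrier, where g = "z \<otimes> y \<otimes> z"])
      (simp_all add: orbit_tuple_def beta23_def word_normalize)
  subgoal by (rule act_word_tclass_conjI[OF orbit_tuple_carrier, where g = "\<one>"])
      (simp_all add: orbit_tuple_def beta23_def word_normalize)
  subgoal by (rule act_word_tclass_conjI[OF orbit_tuple_carrier, where g = "z \<otimes> y \<otimes> z"])
      (simp_all add: orbit_tuple_def beta23_def word_normalize)
  done

lemma beta24_orbit_class:
  "act_word G beta24 (orbit_class 1) = orbit_class 1"
  "act_word G beta24 (orbit_class 2) = orbit_class 4"
  "act_word G beta24 (orbit_class 3) = orbit_class 2"
  "act_word G beta24 (orbit_class 4) = orbit_class 3"
  unfolding orbit_class_def
  subgoal by (rule act_word_tclass_conjI[OF orbit_tuple_carrier, where g = "y \<otimes> z \<otimes> y \<otimes> z"])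
      (simp_all add: orbit_tuple_def beta24_def word_normalize)
  subgoal by (rule act_word_tclass_conjI[OF orbit_tuple_carrier, where g = "y \<otimes> z"])
      (simp_all add: orbit_tuple_def beta24_def word_normalize)
  subgoal by (rule act_word_tclass_conjI[OF orbit_tuple_carrier, where g = "z \<otimes> y \<otimes> y"])
      (simp_all add: orbit_tuple_def beta24_def word_normalize)
  subgoal by (rule act_word_tclass_conjI[OF orbit_tuple_carrier, where g = "\<one>"])
      (simp_all add: orbit_tuple_def beta24_def word_normalize)
  done

lemma beta34_orbit_class:
  "act_word G beta34 (orbit_class 1) = orbit_class 2"
  "act_word G beta34 (orbit_class 2) = orbit_class 3"
  "act_word G beta34 (orbit_class 3) = orbit_class 1"
  "act_word G beta34 (orbit_class 4) = orbit_class 4"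
  unfolding orbit_class_def
  subgoal by (rule act_word_tclass_conjI[OF orbit_tuple_carrier, where g = "z \<otimes> y"])
      (simp_all add: orbit_tuple_def beta34_def word_normalize)
  subgoal by (rule act_word_tclass_conjI[OF orbit_tuple_carrier, where g = "z \<otimes> y \<otimes> y \<otimes> z"])
      (simp_all add: orbit_tuple_def beta34_def word_normalize)
  subgoal by (rule act_word_tclass_conjI[OF orbit_tuple_carrier, where g = "z"])
      (simp_all add: orbit_tuple_def beta34_def word_normalize)
  subgoal by (rule act_word_tclass_conjI[OF orbit_tuple_carrier, where g = "z \<otimes> y \<otimes> z \<otimes> y"])
      (simp_all add: orbit_tuple_def beta34_def word_normalize)
  done

lemma pure_gens_induce_3_cycles:
  "induces_perm G 4 orbit_class beta12 (cycle_of_list [1, 2, 3])"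
  "induces_perm G 4 orbit_class beta13 (cycle_of_list [1, 3, 4])"
  "induces_perm G 4 orbit_class beta14 (cycle_of_list [1, 4, 2])"
  "induces_perm G 4 orbit_class beta23 (cycle_of_list [1, 4, 2])"
  "induces_perm G 4 orbit_class beta24 (cycle_of_list [2, 4, 3])"
  "induces_perm G 4 orbit_class beta34 (cycle_of_list [1, 2, 3])"
proof -
  have "{1..4} = {1, 2, 3, 4 :: nat}" by auto
  then show
    "induces_perm G 4 orbit_class beta12 (cycle_of_list [1, 2, 3])"
    "induces_perm G 4 orbit_class beta13 (cycle_of_list [1, 3, 4])"
    "induces_perm G 4 orbit_class beta14 (cycle_of_list [1, 4, 2])"
    "induces_perm G 4 orbit_class beta23 (cycle_of_list [1, 4, 2])"
    "induces_perm G 4 orbit_class beta24 (cycle_of_list [2, 4, 3])"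
    "induces_perm G 4 orbit_class beta34 (cycle_of_list [1, 2, 3])"
    unfolding induces_perm_def
    by (simp_all add: transpose_def beta12_orbit_class beta13_orbit_class beta14_orbit_class
        beta23_orbit_class beta24_orbit_class beta34_orbit_class del: One_nat_def)
qed

lemma pure_gens_induce_even_perm_on_orbit:
  "w \<in> pure_gens \<Longrightarrow> \<exists>p\<in>carrier (alt_group 4). induces_perm G 4 orbit_class w p"
  using pure_gens_induce_3_cycles
    three_cycle_in_alt_group[of 1 2 3 4] three_cycle_in_alt_group[of 1 3 4 4]
    three_cycle_in_alt_group[of 1 4 2 4] three_cycle_in_alt_group[of 2 4 3 4]
  unfolding pure_gens_def by auto

end

locale centerless_modular_quotient = modular_pair +
  assumes generated: "generate G {y \<otimes> z, z \<otimes> y} = carrier G"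
    and center_trivial: "grp_center G = {\<one>}"
    and nontrivial: "carrier G \<noteq> {\<one>}"
begin

lemma s1_s2_noncommuting: "s1 \<otimes> s2 \<noteq> s2 \<otimes> s1"
  by (rule two_generators_noncommuting[OF generated]) (simp_all add: center_trivial nontrivial)

lemma s1_neq_s2: "s1 \<noteq> s2"
  using s1_s2_noncommuting by metis

lemma coincidences_orbit_tuple:
  "coincidences (orbit_tuple 1) = (False, True, False)"
  "coincidences (orbit_tuple 2) = (False, False, False)"
  "coincidences (orbit_tuple 3) = (False, False, True)"
  "coincidences (orbit_tuple 4) = (True, False, False)"
proof -
  have "s2 \<otimes> s1 \<otimes> inv s2 = gconj G s2 s1" by (simp add: gconj_def)
  moreover have "gconj G s2 s1 \<noteq> s1"
    using s1_s2_noncommuting by (simp add: gconj_eq_self_iff m_assoc)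
  ultimately show "coincidences (orbit_tuple 2) = (False, False, False)"
    using s1_neq_s2 by (simp add: orbit_tuple_def gconj_eq_conjugator_iff del: One_nat_def)
qed (use s1_neq_s2 in \<open>simp_all add: orbit_tuple_def\<close>)

lemma inj_on_orbit_class: "inj_on orbit_class {1..4}"
proof (rule inj_onI)
  fix i j :: nat assume "i \<in> {1..4}" "j \<in> {1..4}" and "orbit_class i = orbit_class j"
  moreover have "{1..4} = {1, 2, 3, 4 :: nat}" by auto
  moreover have "coincidences (orbit_tuple i) = coincidences (orbit_tuple j)"
    using tclass_neqI[OF orbit_tuple_carrier orbit_tuple_carrier] \<open>orbit_class i = orbit_class j\<close>
    unfolding orbit_class_def by blast
  ultimately show "i = j" by (auto simp: coincidences_orbit_tuple simp del: One_nat_def)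
qed

lemma tclass_in_Sigma_CCCD:
  assumes "a \<in> conj_class G s1" "b \<in> conj_class G s1" "c \<in> conj_class G s1"
    and "d \<in> conj_class G (s1 \<otimes> s2 \<otimes> s1)"
    and "s1 \<in> {a, b, c, d}" "s2 \<in> {a, b, c, d}" and "a \<otimes> b \<otimes> c \<otimes> d = \<one>"
  shows "tclass G (a, b, c, d) \<in>
    Sigma_i G (conj_class G s1) (conj_class G s1) (conj_class G s1) (conj_class G (s1 \<otimes> s2 \<otimes> s1))"
proof (rule tclass_in_Sigma_iI[OF assms(1-4) _ assms(7)])
  have "conj_class G s1 \<subseteq> carrier G" "conj_class G (s1 \<otimes> s2 \<otimes> s1) \<subseteq> carrier G"
    by (simp_all add: conj_class_subset_carrier)
  then have "{a, b, c, d} \<subseteq> carrier G" using assms(1-4) by blast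
  moreover have "{s1, s2} \<subseteq> {a, b, c, d}" using assms(5,6) by blast
  ultimately show "generate G {a, b, c, d} = carrier G"
    using generate_eq_carrier_mono[OF generated] by blast
qed

lemma orbit_class_in_Sigma_i:
  assumes "i \<in> {1..4}"
  shows "orbit_class i \<in>
    Sigma_i G (conj_class G s1) (conj_class G s1) (conj_class G s1) (conj_class G (s1 \<otimes> s2 \<otimes> s1))"
proof -
  have C1: "s1 \<in> conj_class G s1" by (simp add: conj_class_self)
  have "gconj G z s1 = s2" by (simp add: word_normalize)
  then have C2: "s2 \<in> conj_class G s1" using conj_classI[of z s1] by simp
  have C3: "s2 \<otimes> s1 \<otimes> inv s2 \<in> conj_class G s1" using conj_classI[of s2 s1] by (simp add: gconj_def)
  have D1: "s1 \<otimes> s2 \<otimes> s1 \<in> conj_class G (s1 \<otimes> s2 \<otimes> s1)" by (simp add: conj_class_self)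
  have "gconj G (inv s1) (s1 \<otimes> s2 \<otimes> s1) = s2 \<otimes> s1 \<otimes> s1" by (simp add: word_normalize)
  then have D2: "s2 \<otimes> s1 \<otimes> s1 \<in> conj_class G (s1 \<otimes> s2 \<otimes> s1)"
    using conj_classI[of "inv s1" "s1 \<otimes> s2 \<otimes> s1"] by simp
  have "gconj G (z \<otimes> s1) (s1 \<otimes> s2 \<otimes> s1) = s2 \<otimes> s2 \<otimes> s1" by (simp add: word_normalize)
  then have D3: "s2 \<otimes> s2 \<otimes> s1 \<in> conj_class G (s1 \<otimes> s2 \<otimes> s1)"
    using conj_classI[of "z \<otimes> s1" "s1 \<otimes> s2 \<otimes> s1"] by simp
  consider "i = 1" | "i = 2" | "i = 3" | "i = 4" using assms by force
  then show ?thesis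
  proof cases
    case 1
    then show ?thesis unfolding orbit_class_def orbit_tuple_def
      by simp (rule tclass_in_Sigma_CCCD[OF C1 C2 C1 D1]; simp add: word_normalize)
  next
    case 2
    then show ?thesis unfolding orbit_class_def orbit_tuple_def
      by simp (rule tclass_in_Sigma_CCCD[OF C3 C2 C1 D2]; simp add: word_normalize)
  next
    case 3
    then show ?thesis unfolding orbit_class_def orbit_tuple_def
      by simp (rule tclass_in_Sigma_CCCD[OF C2 C1 C1 D2]; simp add: word_normalize)
  next
    case 4
    then show ?thesis unfolding orbit_class_def orbit_tuple_def
      by simp (rule tclass_in_Sigma_CCCD[OF C2 C2 C1 D3]; simp add: word_normalize)
  qed
qed

end

sublocale centerless_modular_quotient \<subseteq> braid_permuted_classes G 4 orbit_class
proof
  show "inj_on orbit_class {1..4}" by (fact inj_on_orbit_class)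
  show "\<exists>t\<in>carrier4 G. orbit_class i = tclass G t" for i
    using orbit_tuple_carrier unfolding orbit_class_def by blast
qed (fact pure_gens_induce_even_perm_on_orbit)

context centerless_modular_quotient
begin

lemma orbitB_orbit_class: "orbitB G (orbit_class 1) = orbit_class ` {1..4}"
proof
  show "orbitB G (orbit_class 1) \<subseteq> orbit_class ` {1..4}" by (rule orbitB_subset) simp
  have in_orbit: "act_word G w (orbit_class 1) \<in> orbitB G (orbit_class 1)" if "w \<in> pure_words" for w
    using that unfolding orbitB_def by blast
  have "beta12 \<in> pure_words" "beta13 \<in> pure_words" "beta14 \<in> pure_words"
    by (simp_all add: pure_gens_in_pure_words pure_gens_def)
  from in_orbit[OF pure_words_Nil] in_orbit[OF this(1)] in_orbit[OF this(2)] in_orbit[OF this(3)]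
  have "{orbit_class 1, orbit_class 2, orbit_class 3, orbit_class 4} \<subseteq> orbitB G (orbit_class 1)"
    by (simp add: beta12_orbit_class(1) beta13_orbit_class(1) beta14_orbit_class(1) del: One_nat_def)
  moreover have "{1..4} = {1, 2, 3, 4 :: nat}" by auto
  ultimately show "orbit_class ` {1..4} \<subseteq> orbitB G (orbit_class 1)" by (simp del: One_nat_def)
qed

lemma realized_perms_eq_alt_group_4: "realized_perms = carrier (alt_group 4)"
proof (rule realized_perms_eq_alt_group)
  define a b c where "a = cycle_of_list [1, 2, 3 :: nat]" and "b = cycle_of_list [1, 3, 4 :: nat]"
    and "c = cycle_of_list [1, 4, 2 :: nat]"
  let ?S = "{id, a, b, c, a \<circ> a, b \<circ> a, c \<circ> a, b \<circ> b, b \<circ> a \<circ> a, c \<circ> a \<circ> a, b \<circ> b \<circ> a,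
    b \<circ> b \<circ> a \<circ> a}"
  have "id \<in> realized_perms" "a \<in> realized_perms" "b \<in> realized_perms" "c \<in> realized_perms"
    using induces_perm_Nil pure_words_Nil alt_group_id pure_gens_induce_3_cycles pure_gens_in_pure_words
      three_cycle_in_alt_group[of 1 2 3 4] three_cycle_in_alt_group[of 1 3 4 4]
      three_cycle_in_alt_group[of 1 4 2 4]
    unfolding realized_perms_def a_def b_def c_def pure_gens_def by auto
  then show "?S \<subseteq> realized_perms" by (auto intro!: realized_perms_comp)
  have "card ((\<lambda>p. (p 1, p 2, p 3, p 4)) ` ?S) = 12"
    unfolding a_def b_def c_def by (simp add: transpose_def)
  moreover have "card ((\<lambda>p. (p 1, p 2, p 3, p 4)) ` ?S) \<le> card ?S" by (rule card_image_le) simp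
  moreover have "card (carrier (alt_group 4)) = 12"
    using alt_group_card_carrier[of 4] by (simp add: fact_numeral)
  ultimately show "card (carrier (alt_group 4)) \<le> card ?S" by linarith
qed

lemma card_orbit_class: "card (orbit_class ` {1..4}) = 4"
  using card_image[OF inj_on_orbit_class] by simp

lemma genus_orbit: "genus G (orbit_class ` {1..4}) = 0"
proof -
  have "{1..4} = {1, 2, 3, 4 :: nat}" by auto
  then have Z: "orbit_class ` {1..4} = {orbit_class 1, orbit_class 2, orbit_class 3, orbit_class 4}"
    by (simp del: One_nat_def)
  have "orbit_class 1 \<noteq> orbit_class 2" "orbit_class 1 \<noteq> orbit_class 3" "orbit_class 1 \<noteq> orbit_class 4"
    by (rule inj_on_contraD[OF inj_on_orbit_class]; simp)+
  moreover have "{orbit_class 1, orbit_class 3, orbit_class 4, orbit_class 2} = orbit_class ` {1..4}"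
    "{orbit_class 1, orbit_class 4, orbit_class 2, orbit_class 3} = orbit_class ` {1..4}"
    unfolding Z by auto
  ultimately have "ncycles (act_word G beta12) (orbit_class ` {1..4}) = 2"
    "ncycles (act_word G beta13) (orbit_class ` {1..4}) = 2"
    "ncycles (act_word G beta14) (orbit_class ` {1..4}) = 2"
    using ncycles_3_cycle_fixpoint beta12_orbit_class beta13_orbit_class beta14_orbit_class
    unfolding Z by metis+
  then show ?thesis using card_orbit_class by (simp add: genus_def)
qed

lemma orbit_Z4:
  "let C = conj_class G s1; D = conj_class G (s1 \<otimes> s2 \<otimes> s1);
       h1 = tclass G (s1, s2, s1, s1 \<otimes> s2 \<otimes> s1);
       h2 = tclass G (s2 \<otimes> s1 \<otimes> inv s2, s2, s1, s2 \<otimes> s1 \<otimes> s1);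
       h3 = tclass G (s2, s1, s1, s2 \<otimes> s1 \<otimes> s1);
       h4 = tclass G (s2, s2, s1, s2 \<otimes> s2 \<otimes> s1);
       Z = {h1, h2, h3, h4}
   in orbitB G h1 = Z \<and> card Z = 4 \<and> Z \<subseteq> Sigma_i G C C C D
    \<and> act_word G beta12 h1 = h2 \<and> act_word G beta12 h2 = h3
    \<and> act_word G beta12 h3 = h1 \<and> act_word G beta12 h4 = h4
    \<and> act_word G beta13 h1 = h3 \<and> act_word G beta13 h3 = h4
    \<and> act_word G beta13 h4 = h1 \<and> act_word G beta13 h2 = h2
    \<and> act_word G beta14 h1 = h4 \<and> act_word G beta14 h4 = h2
    \<and> act_word G beta14 h2 = h1 \<and> act_word G beta14 h3 = h3
    \<and> rho_group G Z \<cong> alt_group 4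
    \<and> genus G Z = 0"
proof -
  have h: "tclass G (s1, s2, s1, s1 \<otimes> s2 \<otimes> s1) = orbit_class 1"
    "tclass G (s2 \<otimes> s1 \<otimes> inv s2, s2, s1, s2 \<otimes> s1 \<otimes> s1) = orbit_class 2"
    "tclass G (s2, s1, s1, s2 \<otimes> s1 \<otimes> s1) = orbit_class 3"
    "tclass G (s2, s2, s1, s2 \<otimes> s2 \<otimes> s1) = orbit_class 4"
    by (simp_all add: orbit_class_def orbit_tuple_def)
  have "{1..4} = {1, 2, 3, 4 :: nat}" by auto
  then have Z: "{orbit_class 1, orbit_class 2, orbit_class 3, orbit_class 4} = orbit_class ` {1..4}"
    by (simp del: One_nat_def)
  show ?thesis
    unfolding Let_def h Z
    using orbitB_orbit_class card_orbit_class orbit_class_in_Sigma_i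
      beta12_orbit_class beta13_orbit_class beta14_orbit_class
      rho_group_iso_alt_group[OF realized_perms_eq_alt_group_4] genus_orbit
    by blast
qed

end

theorem theorem6:
  fixes G (structure) and s1 s2 :: 'a
  assumes "group G" and "finite (carrier G)" and "carrier G \<noteq> {\<one>}"
    and "grp_center G = {\<one>}"
    and "s1 \<in> carrier G" and "s2 \<in> carrier G"
    and "generate G {s1, s2} = carrier G"
    and "s1 \<otimes> s2 \<otimes> s1 = s2 \<otimes> s1 \<otimes> s2"
    and "group.ord G (s1 \<otimes> s2 \<otimes> s1) = 2"
  shows "let C = conj_class G s1; D = conj_class G (s1 \<otimes> s2 \<otimes> s1);
             h1 = tclass G (s1, s2, s1, s1 \<otimes> s2 \<otimes> s1);
             h2 = tclass G (s2 \<otimes> s1 \<otimes> inv s2, s2, s1, s2 \<otimes> s1 \<otimes> s1);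
             h3 = tclass G (s2, s1, s1, s2 \<otimes> s1 \<otimes> s1);
             h4 = tclass G (s2, s2, s1, s2 \<otimes> s2 \<otimes> s1);
             Z = {h1, h2, h3, h4}
         in orbitB G h1 = Z \<and> card Z = 4 \<and> Z \<subseteq> Sigma_i G C C C D
          \<and> act_word G beta12 h1 = h2 \<and> act_word G beta12 h2 = h3
          \<and> act_word G beta12 h3 = h1 \<and> act_word G beta12 h4 = h4
          \<and> act_word G beta13 h1 = h3 \<and> act_word G beta13 h3 = h4
          \<and> act_word G beta13 h4 = h1 \<and> act_word G beta13 h2 = h2
          \<and> act_word G beta14 h1 = h4 \<and> act_word G beta14 h4 = h2
          \<and> act_word G beta14 h2 = h1 \<and> act_word G beta14 h3 = h3
          \<and> rho_group G Z \<cong> alt_group 4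
          \<and> genus G Z = 0"
proof -
  interpret group G by (fact assms(1))
  have "(s1 \<otimes> s2 \<otimes> s1) \<otimes> (s1 \<otimes> s2 \<otimes> s1) = \<one>"
    using pow_ord_eq_1[of "s1 \<otimes> s2 \<otimes> s1"] assms(5,6,9) by (simp add: numeral_2_eq_2)
  then obtain y z where yz: "y \<in> carrier G" "z \<in> carrier G" "y \<otimes> y \<otimes> y = \<one>" "z \<otimes> z = \<one>"
    and s1: "s1 = y \<otimes> z" and s2: "s2 = z \<otimes> y"
    using braid_involution_modular_pair[OF assms(5,6,8)] by blast
  interpret centerless_modular_quotient G y z
    using yz assms(3,4,7) unfolding s1 s2 by unfold_locales
  show ?thesis using orbit_Z4 unfolding s1 s2 .
qed

end
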